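(* For $\mathbf F,\mathbf G\in\mathcal M^n$, if $\mathbf G\prec\mathbf F$, then $\mathcal D_n(\mathbf F)\subset\mathcal D_n(\mathbf G)$.
   Context: Work on an atomless probability space. $\mathcal M$ is the set of cdfs on $\mathbb{R}$. For $\mathbf H=(H_1,\dots,H_n)\in\mathcal M^n$, $\mathcal D_n(\mathbf H)=\{\text{cdf of } X_1+\dots+X_n: X_i\sim H_i,\ i=1,\dots,n\}$. $\mathcal Q_n$ is the set of $n\times n$ doubly stochastic matrices; for $\Lambda=(\Lambda_{ij})\in\mathcal Q_n$, $\Lambda\mathbf F$ is the tuple with $i$-th component $\sum_j\Lambda_{ij}F_j$. The majorization order on $\mathcal M^n$: $\mathbf G\prec\mathbf F$ means $\mathbf G=\Lambda\mathbf F$ for some $\Lambda\in\mathcal Q_n$. *)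

theory Defs
  imports "HOL-Probability.Probability"
begin

definition atomless :: "'a measure \<Rightarrow> bool" where
  "atomless M \<longleftrightarrow> (\<forall>A\<in>sets M. measure M A > 0 \<longrightarrow>
     (\<exists>B\<in>sets M. B \<subseteq> A \<and> 0 < measure M B \<and> measure M B < measure M A))"

definition is_cdf :: "(real \<Rightarrow> real) \<Rightarrow> bool" where
  "is_cdf F \<longleftrightarrow> mono F \<and> (\<forall>x. continuous (at_right x) F) \<and>
     (F \<longlongrightarrow> 0) at_bot \<and> (F \<longlongrightarrow> 1) at_top"

definition Dn :: "'a measure \<Rightarrow> nat \<Rightarrow> (nat \<Rightarrow> real \<Rightarrow> real) \<Rightarrow> (real \<Rightarrow> real) set" where
  "Dn M n H = {cdf (distr M borel (\<lambda>\<omega>. \<Sum>i<n. X i \<omega>)) | X.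
      \<forall>i<n. X i \<in> borel_measurable M \<and> cdf (distr M borel (X i)) = H i}"

definition doubly_stochastic :: "nat \<Rightarrow> (nat \<Rightarrow> nat \<Rightarrow> real) \<Rightarrow> bool" where
  "doubly_stochastic n L \<longleftrightarrow> (\<forall>i<n. \<forall>j<n. L i j \<ge> 0) \<and>
     (\<forall>i<n. (\<Sum>j<n. L i j) = 1) \<and> (\<forall>j<n. (\<Sum>i<n. L i j) = 1)"

definition majorized :: "nat \<Rightarrow> (nat \<Rightarrow> real \<Rightarrow> real) \<Rightarrow> (nat \<Rightarrow> real \<Rightarrow> real) \<Rightarrow> bool" where
  "majorized n G F \<longleftrightarrow> (\<exists>L. doubly_stochastic n L \<and>
     (\<forall>i<n. G i = (\<lambda>x. \<Sum>j<n. L i j * F j x)))"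

end

theory Submission
  imports Defs
begin

text \<open>
  By Birkhoff's theorem the doubly stochastic matrix is a convex combination of permutation
  matrices, so that \<open>G i = (\<Sum>\<sigma>. w \<sigma> * F (\<sigma> i))\<close>. Given \<open>X\<close> with \<open>X i \<sim> F i\<close>,
  split the atomless space into events \<open>Om \<sigma>\<close> of probability \<open>w \<sigma>\<close> and place on them a copy
  \<open>Z\<close> of the vector \<open>X\<close> that is independent of the partition. Then \<open>Y i = Z (\<sigma> i)\<close> on
  \<open>Om \<sigma>\<close> has cdf \<open>G i\<close>, while \<open>\<Sum>i. Y i\<close> is a rearrangement of \<open>\<Sum>i. Z i\<close> and so has
  the law of \<open>\<Sum>i. X i\<close>. The copy is the quantile transform of a uniform random variable
  (built by repeated halving, which Sierpinski's theorem makes possible), applied to a single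
  real number that encodes the vector \<open>X\<close> by interleaving digits.
\<close>


section \<open>Hall's theorem and Birkhoff's decomposition\<close>

definition hall_condition :: "'i set \<Rightarrow> ('i \<Rightarrow> 'b set) \<Rightarrow> bool" where
  "hall_condition I A \<longleftrightarrow> (\<forall>J\<subseteq>I. card J \<le> card (\<Union>(A ` J)))"

lemma hall_condition_Diff_tight:
  assumes fin: "finite I" "\<forall>i\<in>I. finite (A i)" and hall: "hall_condition I A"
    and J: "J \<subseteq> I" "card (\<Union>(A ` J)) = card J"
  shows "hall_condition (I - J) (\<lambda>i. A i - \<Union>(A ` J))"
  unfolding hall_condition_def
proof (intro allI impI)
  fix K assume K: "K \<subseteq> I - J"
  have finKJ: "finite K" "finite J" using K J fin finite_subset by blast+
  have "card K + card J = card (K \<union> J)"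
    using K finKJ by (subst card_Un_disjoint) auto
  also have "\<dots> \<le> card (\<Union>(A ` (K \<union> J)))"
    using hall K J unfolding hall_condition_def by blast
  also have "\<dots> = card ((\<Union>(A ` K) - \<Union>(A ` J)) \<union> \<Union>(A ` J))"
    by (rule arg_cong[where f = card]) blast
  also have "\<dots> = card (\<Union>(A ` K) - \<Union>(A ` J)) + card (\<Union>(A ` J))"
    using finKJ fin K J by (intro card_Un_disjoint) auto
  finally show "card K \<le> card (\<Union>i\<in>K. A i - \<Union>(A ` J))" using J(2) by simp
qed

lemma hall_condition_nonempty:
  assumes "hall_condition I A" "i \<in> I"
  shows "A i \<noteq> {}"
proof
  assume "A i = {}"
  moreover have "card {i} \<le> card (\<Union>(A ` {i}))"
    using assms(1)[unfolded hall_condition_def, rule_format, of "{i}"] assms(2) by simp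
  ultimately show False by simp
qed

lemma hall_condition_after_matching:
  assumes fin: "finite I" "\<forall>i\<in>I. finite (A i)" and hall: "hall_condition I A"
    and no_tight: "\<forall>J. J \<noteq> {} \<and> J \<subset> I \<longrightarrow> card (\<Union>(A ` J)) \<noteq> card J" and i: "i \<in> I"
  shows "hall_condition (I - {i}) (\<lambda>j. A j - {a})"
  unfolding hall_condition_def
proof (intro allI impI)
  fix K assume K: "K \<subseteq> I - {i}"
  show "card K \<le> card (\<Union>j\<in>K. A j - {a})"
  proof (cases "K = {}")
    case False
    have "finite (\<Union>(A ` K))" using K fin finite_subset by blast
    moreover have "card K < card (\<Union>(A ` K))"
    proof -
      have "K \<subset> I" using K i by blast
      then have "card K \<le> card (\<Union>(A ` K))" "card (\<Union>(A ` K)) \<noteq> card K"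
        using hall no_tight False unfolding hall_condition_def by blast+
      then show ?thesis by linarith
    qed
    moreover have "(\<Union>j\<in>K. A j - {a}) = \<Union>(A ` K) - {a}" by blast
    ultimately show ?thesis by (simp add: card_Diff_singleton_if del: Union_iff) linarith
  qed simp
qed

lemma inj_on_glue:
  assumes "inj_on f J" "inj_on g K" "f ` J \<inter> g ` K = {}"
  shows "inj_on (\<lambda>i. if i \<in> J then f i else g i) (J \<union> K)"
proof (rule inj_onI)
  have disj: "f x \<noteq> g y" if "x \<in> J" "y \<in> K" for x y using assms(3) that by blast
  fix x y assume "x \<in> J \<union> K" "y \<in> J \<union> K"
    and "(if x \<in> J then f x else g x) = (if y \<in> J then f y else g y)"
  then show "x = y"
    using assms(1,2) disj disj[symmetric] by (cases "x \<in> J"; cases "y \<in> J") (auto dest: inj_onD)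
qed

theorem hall_marriage:
  assumes "finite I" "\<forall>i\<in>I. finite (A i)" "hall_condition I A"
  shows "\<exists>f. inj_on f I \<and> (\<forall>i\<in>I. f i \<in> A i)"
  using assms
proof (induction I arbitrary: A rule: finite_psubset_induct)
  case (psubset I)
  note fin = psubset.hyps psubset.prems(1) and hall = psubset.prems(2)
  show ?case
  proof (cases "\<exists>J. J \<noteq> {} \<and> J \<subset> I \<and> card (\<Union>(A ` J)) = card J")
    case True
    then obtain J where tight: "J \<noteq> {}" "J \<subset> I" "card (\<Union>(A ` J)) = card J" by blast
    have J: "\<forall>i\<in>J. finite (A i)" "hall_condition J A"
      using fin(2) hall tight(2) unfolding hall_condition_def
      by (blast, meson psubset_imp_subset subset_trans)
    obtain f where f: "inj_on f J" "\<forall>i\<in>J. f i \<in> A i"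
      using psubset.IH[OF tight(2) J] by blast
    have "I - J \<subset> I" using tight(1,2) by blast
    moreover have "\<forall>i\<in>I - J. finite (A i - \<Union>(A ` J))" using fin(2) by simp
    moreover have "hall_condition (I - J) (\<lambda>i. A i - \<Union>(A ` J))"
      using hall_condition_Diff_tight[OF fin hall _ tight(3)] tight(2) by blast
    ultimately obtain g where g: "inj_on g (I - J)" "\<forall>i\<in>I - J. g i \<in> A i - \<Union>(A ` J)"
      using psubset.IH[of "I - J" "\<lambda>i. A i - \<Union>(A ` J)"] by blast
    have "inj_on (\<lambda>i. if i \<in> J then f i else g i) (J \<union> (I - J))"
      using f g by (intro inj_on_glue) auto
    moreover have "J \<union> (I - J) = I" using tight(2) by blast
    ultimately have "inj_on (\<lambda>i. if i \<in> J then f i else g i) I" by simp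
    moreover have "\<forall>i\<in>I. (if i \<in> J then f i else g i) \<in> A i" using f(2) g(2) by auto
    ultimately show ?thesis by blast
  next
    case no_tight: False
    show ?thesis
    proof (cases "I = {}")
      case False
      then obtain i where i: "i \<in> I" by blast
      then obtain a where a: "a \<in> A i" using hall_condition_nonempty[OF hall] by blast
      have "\<forall>J. J \<noteq> {} \<and> J \<subset> I \<longrightarrow> card (\<Union>(A ` J)) \<noteq> card J" using no_tight by blast
      then have "hall_condition (I - {i}) (\<lambda>j. A j - {a})"
        using hall_condition_after_matching[OF fin hall _ i] by blast
      moreover have "I - {i} \<subset> I" using i by blast
      moreover have "\<forall>j\<in>I - {i}. finite (A j - {a})" using fin(2) by simp
      ultimately obtain g where g: "inj_on g (I - {i})" "\<forall>j\<in>I - {i}. g j \<in> A j - {a}"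
        using psubset.IH[of "I - {i}" "\<lambda>j. A j - {a}"] by blast
      have "inj_on (g(i := a)) (I - {i})" using g(1) by (simp add: inj_on_def)
      moreover have "a \<notin> g(i := a) ` (I - {i})" using g(2) by auto
      ultimately have "inj_on (g(i := a)) I"
        using inj_on_insert[of "g(i := a)" i "I - {i}"] i by (simp add: insert_absorb)
      moreover have "\<forall>j\<in>I. (g(i := a)) j \<in> A j" using g(2) a by simp
      ultimately show ?thesis by blast
    qed simp
  qed
qed

definition nonneg_semimagic :: "nat \<Rightarrow> real \<Rightarrow> (nat \<Rightarrow> nat \<Rightarrow> real) \<Rightarrow> bool" where
  "nonneg_semimagic n c L \<longleftrightarrow> (\<forall>i<n. \<forall>j<n. 0 \<le> L i j) \<and>
     (\<forall>i<n. (\<Sum>j<n. L i j) = c) \<and> (\<forall>j<n. (\<Sum>i<n. L i j) = c)"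

lemma doubly_stochastic_iff_nonneg_semimagic:
  "doubly_stochastic n L \<longleftrightarrow> nonneg_semimagic n 1 L"
  unfolding doubly_stochastic_def nonneg_semimagic_def ..

lemma nonneg_semimagic_hall_condition:
  assumes L: "nonneg_semimagic n c L" and c: "0 < c"
  shows "hall_condition {..<n} (\<lambda>i. {j. j < n \<and> 0 < L i j})"
  unfolding hall_condition_def
proof (intro allI impI)
  fix J assume J: "J \<subseteq> {..<n}"
  define N where "N = (\<Union>i\<in>J. {j. j < n \<and> 0 < L i j})"
  have N: "N \<subseteq> {..<n}" unfolding N_def by auto
  have "c * card J = (\<Sum>i\<in>J. \<Sum>j<n. L i j)"
    using L J unfolding nonneg_semimagic_def by (simp add: subset_iff)
  also have "\<dots> = (\<Sum>i\<in>J. \<Sum>j\<in>N. L i j)"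
  proof (rule sum.cong[OF refl])
    fix i assume "i \<in> J"
    then have "L i j = 0" if "j \<in> {..<n} - N" for j
    proof -
      have "0 \<le> L i j" using L J \<open>i \<in> J\<close> that unfolding nonneg_semimagic_def by auto
      moreover have "\<not> 0 < L i j" using \<open>i \<in> J\<close> that unfolding N_def by auto
      ultimately show ?thesis by linarith
    qed
    then show "(\<Sum>j<n. L i j) = (\<Sum>j\<in>N. L i j)"
      using N by (intro sum.mono_neutral_right) auto
  qed
  also have "\<dots> = (\<Sum>j\<in>N. \<Sum>i\<in>J. L i j)" by (rule sum.swap)
  also have "\<dots> \<le> (\<Sum>j\<in>N. \<Sum>i<n. L i j)"
    using L J N unfolding nonneg_semimagic_def by (intro sum_mono sum_mono2) auto
  also have "\<dots> = c * card N"
    using L N unfolding nonneg_semimagic_def by (simp add: subset_iff)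
  finally show "card J \<le> card N" using c by simp
qed

lemma nonneg_semimagic_permutation_in_support:
  assumes "nonneg_semimagic n c L" "0 < c"
  obtains \<sigma> where "\<sigma> permutes {..<n}" "\<forall>i<n. 0 < L i (\<sigma> i)"
proof -
  obtain f where f: "inj_on f {..<n}" "\<forall>i\<in>{..<n}. f i \<in> {j. j < n \<and> 0 < L i j}"
    using hall_marriage[OF _ _ nonneg_semimagic_hall_condition[OF assms]] by auto
  define \<sigma> where "\<sigma> i = (if i < n then f i else i)" for i
  have "\<sigma> permutes {..<n}"
    by (rule inj_imp_permutes) (use f in \<open>auto simp: \<sigma>_def inj_on_def\<close>)
  moreover have "\<forall>i<n. 0 < L i (\<sigma> i)" using f(2) by (simp add: \<sigma>_def)
  ultimately show ?thesis by (rule that)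
qed

lemma nonneg_semimagic_subtract_permutation:
  assumes L: "nonneg_semimagic n c L" and \<sigma>: "\<sigma> permutes {..<n}" and m: "\<forall>i<n. m \<le> L i (\<sigma> i)"
  shows "nonneg_semimagic n (c - m) (\<lambda>i j. L i j - (if \<sigma> i = j then m else 0))"
proof -
  have row: "(\<Sum>j<n. if \<sigma> i = j then m else 0) = m" if "i < n" for i
    using permutes_in_image[OF \<sigma>] that by simp
  have col: "(\<Sum>i<n. if \<sigma> i = j then m else 0) = m" if "j < n" for j
  proof -
    have "(\<Sum>i<n. if \<sigma> i = j then m else 0) = (\<Sum>i<n. if i = j then m else 0)"
      using sum.permute[OF \<sigma>, of "\<lambda>i. if i = j then m else 0"] by (simp add: comp_def)
    also have "\<dots> = m" using that by simp
    finally show ?thesis .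
  qed
  show ?thesis using L m row col unfolding nonneg_semimagic_def by (auto simp: sum_subtractf)
qed

definition positive_entries :: "nat \<Rightarrow> (nat \<Rightarrow> nat \<Rightarrow> real) \<Rightarrow> (nat \<times> nat) set" where
  "positive_entries n L = {(i, j). i < n \<and> j < n \<and> 0 < L i j}"

lemma nonneg_semimagic_peel_permutation:
  assumes L: "nonneg_semimagic n c L" and ij: "i0 < n" "j0 < n" "0 < L i0 j0"
  obtains \<sigma> m where "\<sigma> permutes {..<n}" "0 < m"
    "nonneg_semimagic n (c - m) (\<lambda>i j. L i j - (if \<sigma> i = j then m else 0))"
    "card (positive_entries n (\<lambda>i j. L i j - (if \<sigma> i = j then m else 0))) <
      card (positive_entries n L)"
proof -
  have "L i0 j0 \<le> (\<Sum>j<n. L i0 j)"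
    using L ij unfolding nonneg_semimagic_def by (intro member_le_sum) auto
  then have "0 < c" using L ij unfolding nonneg_semimagic_def by auto
  then obtain \<sigma> where \<sigma>: "\<sigma> permutes {..<n}" "\<forall>i<n. 0 < L i (\<sigma> i)"
    using nonneg_semimagic_permutation_in_support[OF L] by blast
  define m where "m = Min ((\<lambda>i. L i (\<sigma> i)) ` {..<n})"
  have m_le: "\<forall>i<n. m \<le> L i (\<sigma> i)" unfolding m_def by simp
  obtain i1 where i1: "i1 < n" "L i1 (\<sigma> i1) = m"
    using Min_in[of "(\<lambda>i. L i (\<sigma> i)) ` {..<n}"] ij(1) unfolding m_def by fastforce
  have "0 < m" using i1 \<sigma>(2) by fastforce
  let ?L' = "\<lambda>i j. L i j - (if \<sigma> i = j then m else 0)"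
  have "positive_entries n ?L' \<subseteq> positive_entries n L - {(i1, \<sigma> i1)}"
    using L m_le i1 \<open>0 < m\<close> unfolding positive_entries_def nonneg_semimagic_def
    by (auto split: if_splits)
  moreover have "(i1, \<sigma> i1) \<in> positive_entries n L"
    using i1 \<open>0 < m\<close> permutes_in_image[OF \<sigma>(1)] unfolding positive_entries_def by auto
  moreover have "finite (positive_entries n L)"
    unfolding positive_entries_def by (rule finite_subset[of _ "{..<n} \<times> {..<n}"]) auto
  ultimately have "card (positive_entries n ?L') < card (positive_entries n L)"
    by (meson card_Diff1_less card_mono finite_Diff le_less_trans)
  with \<sigma>(1) \<open>0 < m\<close> nonneg_semimagic_subtract_permutation[OF L \<sigma>(1) m_le] show ?thesis
    by (rule that)
qed

lemma sum_permutations_add_point: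
  fixes n :: nat and w :: "(nat \<Rightarrow> nat) \<Rightarrow> 'a::comm_monoid_add"
  assumes "\<sigma> permutes {..<n}"
  shows "(\<Sum>\<tau> | \<tau> permutes {..<n} \<and> \<tau> i = j. w \<tau> + (if \<tau> = \<sigma> then m else 0)) =
    (\<Sum>\<tau> | \<tau> permutes {..<n} \<and> \<tau> i = j. w \<tau>) + (if \<sigma> i = j then m else 0)"
proof -
  have "finite {\<tau>. \<tau> permutes {..<n} \<and> \<tau> i = j}"
    by (rule finite_subset[OF _ finite_permutations[of "{..<n}"]]) auto
  then show ?thesis unfolding sum.distrib using assms by (simp add: sum.delta')
qed

theorem birkhoff_decomposition:
  assumes "nonneg_semimagic n c L"
  shows "\<exists>w. (\<forall>\<sigma>. 0 \<le> w \<sigma>) \<and>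
    (\<forall>i<n. \<forall>j<n. L i j = (\<Sum>\<sigma> | \<sigma> permutes {..<n} \<and> \<sigma> i = j. w \<sigma>))"
  using assms
proof (induction "card (positive_entries n L)" arbitrary: L c rule: less_induct)
  case less
  note L = less.prems
  show ?case
  proof (cases "positive_entries n L = {}")
    case True
    have "L i j = 0" if "i < n" "j < n" for i j
    proof -
      have "\<not> 0 < L i j" using True that unfolding positive_entries_def by blast
      moreover have "0 \<le> L i j" using L that unfolding nonneg_semimagic_def by blast
      ultimately show ?thesis by linarith
    qed
    then show ?thesis by (intro exI[of _ "\<lambda>_. 0"]) simp
  next
    case False
    then obtain i0 j0 where "i0 < n" "j0 < n" "0 < L i0 j0" unfolding positive_entries_def by blast
    then obtain \<sigma> m where \<sigma>: "\<sigma> permutes {..<n}" "0 < m"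
      and L': "nonneg_semimagic n (c - m) (\<lambda>i j. L i j - (if \<sigma> i = j then m else 0))"
      and smaller: "card (positive_entries n (\<lambda>i j. L i j - (if \<sigma> i = j then m else 0))) <
        card (positive_entries n L)"
      using nonneg_semimagic_peel_permutation[OF L] by blast
    obtain w where w: "\<forall>\<tau>. 0 \<le> w \<tau>"
      "\<forall>i<n. \<forall>j<n. L i j - (if \<sigma> i = j then m else 0) = (\<Sum>\<tau> | \<tau> permutes {..<n} \<and> \<tau> i = j. w \<tau>)"
      using less.hyps[OF smaller L'] by blast
    define w' where "w' \<tau> = w \<tau> + (if \<tau> = \<sigma> then m else 0)" for \<tau>
    have "\<forall>\<tau>. 0 \<le> w' \<tau>" using w(1) \<sigma>(2) by (simp add: w'_def)
    moreover have "L i j = (\<Sum>\<tau> | \<tau> permutes {..<n} \<and> \<tau> i = j. w' \<tau>)" if "i < n" "j < n" for i j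
    proof -
      have "L i j - (if \<sigma> i = j then m else 0) = (\<Sum>\<tau> | \<tau> permutes {..<n} \<and> \<tau> i = j. w \<tau>)"
        using w(2) that by blast
      then show ?thesis unfolding w'_def sum_permutations_add_point[OF \<sigma>(1)] by simp
    qed
    ultimately show ?thesis by blast
  qed
qed

lemma sum_permutations_group_by_image:
  fixes g :: "(nat \<Rightarrow> nat) \<Rightarrow> 'a::comm_monoid_add"
  assumes "i < n"
  shows "(\<Sum>j<n. \<Sum>\<sigma> | \<sigma> permutes {..<n} \<and> \<sigma> i = j. g \<sigma>) = (\<Sum>\<sigma> | \<sigma> permutes {..<n}. g \<sigma>)"
proof -
  have "(\<lambda>\<sigma>. \<sigma> i) ` {\<sigma>. \<sigma> permutes {..<n}} \<subseteq> {..<n}"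
    using permutes_in_image assms by fastforce
  then show ?thesis
    using sum.group[of "{\<sigma>. \<sigma> permutes {..<n}}" "{..<n}" "\<lambda>\<sigma>. \<sigma> i" g]
    by (simp add: finite_permutations)
qed

lemma sum_permutations_glue:
  fixes g :: "nat \<Rightarrow> 'a::comm_semiring_1"
  shows "(\<Sum>i<n. \<Sum>\<sigma> | \<sigma> permutes {..<n}. g (\<sigma> i) * c \<sigma>) =
    (\<Sum>\<sigma> | \<sigma> permutes {..<n}. (\<Sum>j<n. g j) * c \<sigma>)"
proof -
  have "(\<Sum>i<n. g (\<sigma> i) * c \<sigma>) = (\<Sum>j<n. g j) * c \<sigma>" if "\<sigma> permutes {..<n}" for \<sigma>
    using sum.permute[OF that, of g] by (simp add: comp_def sum_distrib_right)
  then show ?thesis by (subst sum.swap) (rule sum.cong; simp)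
qed

lemma majorized_imp_permutation_mixture:
  assumes "majorized n G F"
  obtains w where "\<forall>\<sigma>. 0 \<le> w \<sigma>" "(\<Sum>\<sigma> | \<sigma> permutes {..<n}. w \<sigma>) = 1"
    "\<forall>i<n. \<forall>x. G i x = (\<Sum>\<sigma> | \<sigma> permutes {..<n}. w \<sigma> * F (\<sigma> i) x)"
proof (cases "n = 0")
  case True
  then show ?thesis by (intro that[of "\<lambda>\<sigma>. if \<sigma> = id then 1 else 0"]) auto
next
  case False
  obtain L where L: "nonneg_semimagic n 1 L" "\<forall>i<n. G i = (\<lambda>x. \<Sum>j<n. L i j * F j x)"
    using assms unfolding majorized_def doubly_stochastic_iff_nonneg_semimagic by blast
  obtain w where w: "\<forall>\<sigma>. 0 \<le> w \<sigma>"
    "\<forall>i<n. \<forall>j<n. L i j = (\<Sum>\<sigma> | \<sigma> permutes {..<n} \<and> \<sigma> i = j. w \<sigma>)"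
    using birkhoff_decomposition[OF L(1)] by blast
  have "(\<Sum>\<sigma> | \<sigma> permutes {..<n}. w \<sigma>) = (\<Sum>j<n. L 0 j)"
    using w(2) False by (simp add: sum_permutations_group_by_image)
  also have "\<dots> = 1" using L(1) False unfolding nonneg_semimagic_def by simp
  finally have "(\<Sum>\<sigma> | \<sigma> permutes {..<n}. w \<sigma>) = 1" .
  moreover have "G i x = (\<Sum>\<sigma> | \<sigma> permutes {..<n}. w \<sigma> * F (\<sigma> i) x)" if "i < n" for i x
  proof -
    have "G i x = (\<Sum>j<n. \<Sum>\<sigma> | \<sigma> permutes {..<n} \<and> \<sigma> i = j. w \<sigma> * F j x)"
      using L(2) w(2) that by (simp add: sum_distrib_right)
    also have "\<dots> = (\<Sum>j<n. \<Sum>\<sigma> | \<sigma> permutes {..<n} \<and> \<sigma> i = j. w \<sigma> * F (\<sigma> i) x)"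
      by (intro sum.cong) auto
    also have "\<dots> = (\<Sum>\<sigma> | \<sigma> permutes {..<n}. w \<sigma> * F (\<sigma> i) x)"
      using that by (rule sum_permutations_group_by_image)
    finally show ?thesis .
  qed
  ultimately show ?thesis using w(1) that by blast
qed

section \<open>Coding finitely many reals by one real\<close>

definition digit :: "nat \<Rightarrow> nat \<Rightarrow> real \<Rightarrow> real" where
  "digit b k u = of_int (\<lfloor>real b ^ Suc k * u\<rfloor> - int b * \<lfloor>real b ^ k * u\<rfloor>)"

lemma sum_digit_telescope:
  assumes "0 < b"
  shows "(\<Sum>k<N. digit b k u / real b ^ Suc k) = \<lfloor>real b ^ N * u\<rfloor> / real b ^ N - \<lfloor>u\<rfloor>"
proof (induction N)
  case (Suc N)
  have "digit b N u / real b ^ Suc N =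
      \<lfloor>real b ^ Suc N * u\<rfloor> / real b ^ Suc N - \<lfloor>real b ^ N * u\<rfloor> / real b ^ N"
    using assms by (simp add: digit_def field_simps)
  then show ?case using Suc by simp
qed simp

lemma sums_digit:
  assumes "1 < b"
  shows "(\<lambda>k. digit b k u / real b ^ Suc k) sums frac u"
proof -
  have "(\<lambda>N. \<lfloor>real b ^ N * u\<rfloor> / real b ^ N) \<longlonglongrightarrow> u"
  proof (rule real_tendsto_sandwich[of "\<lambda>N. u - (1 / real b) ^ N" _ _ "\<lambda>_. u"])
    have "u - (1 / real b) ^ N \<le> \<lfloor>real b ^ N * u\<rfloor> / real b ^ N" for N
    proof -
      have p: "0 < real b ^ N" using assms by simp
      have "(real b ^ N * u - 1) / real b ^ N \<le> \<lfloor>real b ^ N * u\<rfloor> / real b ^ N"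
        using p real_of_int_floor_add_one_ge[of "real b ^ N * u"] by (intro divide_right_mono) auto
      then show ?thesis using assms by (simp add: power_one_over diff_divide_distrib)
    qed
    then show "\<forall>\<^sub>F N in sequentially. u - (1 / real b) ^ N \<le> \<lfloor>real b ^ N * u\<rfloor> / real b ^ N"
      by simp
    show "\<forall>\<^sub>F N in sequentially. \<lfloor>real b ^ N * u\<rfloor> / real b ^ N \<le> u"
      using assms by (simp add: divide_le_eq mult.commute)
    show "(\<lambda>N. u - (1 / real b) ^ N) \<longlonglongrightarrow> u"
      using tendsto_diff[OF tendsto_const LIMSEQ_power_zero[of "1 / real b"]] assms by simp
  qed simp
  then show ?thesis
    unfolding sums_def sum_digit_telescope[OF order.strict_trans[OF zero_less_one assms]] frac_def
    by (intro tendsto_diff tendsto_const)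
qed

lemma digit_2_cases: "digit 2 k u = 0 \<or> digit 2 k u = 1"
proof -
  have "\<lfloor>2 * (2 ^ k * u)\<rfloor> - 2 * \<lfloor>2 ^ k * u\<rfloor> \<in> {0, 1}"
    by (simp add: floor_eq_iff) linarith
  then show ?thesis by (auto simp: digit_def mult.assoc)
qed

lemma ternary_01_tail:
  fixes c :: "nat \<Rightarrow> real"
  assumes c: "\<forall>j. c j = 0 \<or> c j = 1"
  shows "0 \<le> (\<Sum>j. c (K + j) / 3 ^ Suc j)" "(\<Sum>j. c (K + j) / 3 ^ Suc j) < 1"
    and "3 * (\<Sum>j. c (K + j) / 3 ^ Suc j) = c K + (\<Sum>j. c (Suc K + j) / 3 ^ Suc j)"
proof -
  have c01: "0 \<le> c j" "c j \<le> 1" for j using c[rule_format, of j] by auto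
  have bound: "c (K + j) / 3 ^ Suc j \<le> (1 / 3) * (1 / 3) ^ j" for K j
  proof -
    have "c (K + j) / 3 ^ Suc j \<le> 1 / 3 ^ Suc j" using c01 by (intro divide_right_mono) auto
    then show ?thesis by (simp add: power_one_over)
  qed
  have geom: "(\<lambda>j. (1 / 3) * (1 / 3 :: real) ^ j) sums (1 / 2)"
    using sums_mult[OF geometric_sums[of "1 / 3 :: real"], of "1 / 3"] by simp
  have summable: "summable (\<lambda>j. c (K + j) / 3 ^ Suc j)" for K
    using bound c01 by (intro summable_comparison_test'[OF sums_summable[OF geom]]) simp
  show "0 \<le> (\<Sum>j. c (K + j) / 3 ^ Suc j)" using summable by (rule suminf_nonneg) (simp add: c01)
  have "(\<Sum>j. c (K + j) / 3 ^ Suc j) \<le> (\<Sum>j. (1 / 3) * (1 / 3) ^ j)"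
    using bound by (intro suminf_le summable sums_summable[OF geom])
  also have "\<dots> = 1 / 2" using geom by (rule sums_unique[symmetric])
  finally show "(\<Sum>j. c (K + j) / 3 ^ Suc j) < 1" by simp
  have "(\<Sum>j. c (K + Suc j) / 3 ^ Suc (Suc j)) = (\<Sum>j. c (Suc K + j) / 3 ^ Suc j) / 3"
    using suminf_divide[OF summable[of "Suc K"], of 3] by simp
  then show "3 * (\<Sum>j. c (K + j) / 3 ^ Suc j) = c K + (\<Sum>j. c (Suc K + j) / 3 ^ Suc j)"
    using suminf_split_head[OF summable[of K]] by simp
qed

lemma digit_3_of_01_sum:
  assumes c: "\<forall>j. c j = 0 \<or> c j = 1"
  shows "digit 3 K (\<Sum>j. c j / 3 ^ Suc j) = c K"
proof -
  define t where "t K = (\<Sum>j. c (K + j) / 3 ^ Suc j)" for K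
  have t_bounds: "0 \<le> t K" "t K < 1" and t_Suc: "3 * t K = c K + t (Suc K)" for K
    unfolding t_def using ternary_01_tail[OF c] by blast+
  have c_Ints: "c K \<in> \<int>" for K using c[rule_format, of K] by auto
  have "3 ^ K * t 0 - t K \<in> \<int>" for K
  proof (induction K)
    case (Suc K)
    have "3 ^ Suc K * t 0 - t (Suc K) = 3 * (3 ^ K * t 0 - t K) + c K"
      using t_Suc[of K] by (simp add: algebra_simps)
    moreover have "3 * (3 ^ K * t 0 - t K) + c K \<in> \<int>"
      using Suc.IH c_Ints by (intro Ints_add Ints_mult) auto
    ultimately show ?case by metis
  qed simp
  then obtain z where z: "3 ^ K * t 0 = of_int z + t K"
    by (metis Ints_cases diff_eq_eq add.commute)
  have "\<lfloor>3 ^ K * t 0\<rfloor> = z" using z t_bounds[of K] by (simp add: floor_eq_iff)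
  moreover have "\<lfloor>3 ^ Suc K * t 0\<rfloor> = 3 * z + \<lfloor>c K\<rfloor>"
  proof -
    have "3 ^ Suc K * t 0 = of_int (3 * z) + c K + t (Suc K)"
      using z t_Suc[of K] by (simp add: algebra_simps)
    then show ?thesis using c[rule_format, of K] t_bounds[of "Suc K"] by (auto simp: floor_eq_iff)
  qed
  ultimately show ?thesis using c[rule_format, of K] by (auto simp: digit_def t_def)
qed

definition squash :: "real \<Rightarrow> real" where
  "squash x = arctan x / pi + 1 / 2"

definition unsquash :: "real \<Rightarrow> real" where
  "unsquash u = tan (pi * u - pi / 2)"

lemma squash_bounds: "0 < squash x" "squash x < 1"
  using arctan_bounded[of x] by (simp_all add: squash_def field_simps)

lemma unsquash_squash: "unsquash (squash x) = x"
  by (simp add: squash_def unsquash_def algebra_simps tan_arctan)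

text \<open>
  As all ternary digits are \<open>0\<close> or \<open>1\<close>, no carries occur and they
  can be read off again.
\<close>

definition encode :: "nat \<Rightarrow> (nat \<Rightarrow> real) \<Rightarrow> real" where
  "encode n x = (\<Sum>j. digit 2 (j div n) (squash (x (j mod n))) / 3 ^ Suc j)"

definition decode :: "nat \<Rightarrow> nat \<Rightarrow> real \<Rightarrow> real" where
  "decode n i z = unsquash (\<Sum>k. digit 3 (k * n + i) z / 2 ^ Suc k)"

lemma decode_encode:
  assumes "i < n"
  shows "decode n i (encode n x) = x i"
proof -
  have "digit 3 (k * n + i) (encode n x) = digit 2 k (squash (x i))" for k
    unfolding encode_def using digit_2_cases assms by (subst digit_3_of_01_sum) auto
  moreover have "(\<lambda>k. digit 2 k (squash (x i)) / 2 ^ Suc k) sums squash (x i)"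
    using sums_digit[of 2 "squash (x i)"] squash_bounds[of "x i"] by (simp add: frac_eq)
  ultimately show ?thesis by (simp add: decode_def sums_iff unsquash_squash)
qed

lemma measurable_digit [measurable]: "digit b k \<in> borel_measurable borel"
  unfolding digit_def by measurable

lemma measurable_decode [measurable]: "decode n i \<in> borel_measurable borel"
  unfolding decode_def unsquash_def tan_def by measurable

lemma measurable_encode [measurable]:
  assumes [measurable]: "\<And>i. X i \<in> borel_measurable M"
  shows "(\<lambda>\<omega>. encode n (\<lambda>i. X i \<omega>)) \<in> borel_measurable M"
  unfolding encode_def squash_def by measurable

lemma exists_measurable_code:
  assumes "\<forall>i<n. X i \<in> borel_measurable M"
  obtains Z where "Z \<in> borel_measurable M" "\<And>i \<omega>. i < n \<Longrightarrow> decode n i (Z \<omega>) = X i \<omega>"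
proof
  have "(\<lambda>\<omega>. if i < n then X i \<omega> else 0) \<in> borel_measurable M" for i
    using assms by (cases "i < n") auto
  then show "(\<lambda>\<omega>. encode n (\<lambda>i. if i < n then X i \<omega> else 0)) \<in> borel_measurable M"
    by (rule measurable_encode)
  show "decode n i (encode n (\<lambda>i. if i < n then X i \<omega> else 0)) = X i \<omega>" if "i < n" for i \<omega>
    using decode_encode[OF that] that by simp
qed

section \<open>Quantile transform and random variables glued along a partition\<close>

lemma cdf_distr_eq_prob:
  assumes "f \<in> borel_measurable M"
  shows "cdf (distr M borel f) x = measure M {\<omega> \<in> space M. f \<omega> \<le> x}"
proof -
  have "f -` {..x} \<inter> space M = {\<omega> \<in> space M. f \<omega> \<le> x}" by auto
  then show ?thesis unfolding cdf_def using assms by (simp add: measure_distr)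
qed

lemma (in prob_space) exists_distributed_of_uniform:
  assumes U: "U \<in> borel_measurable M"
    and uniform_less: "\<And>c. 0 \<le> c \<Longrightarrow> c \<le> 1 \<Longrightarrow> prob {\<omega> \<in> space M. U \<omega> < c} = c"
    and uniform_le: "\<And>c. 0 \<le> c \<Longrightarrow> c \<le> 1 \<Longrightarrow> prob {\<omega> \<in> space M. U \<omega> \<le> c} = c"
    and \<nu>: "real_distribution \<nu>"
  shows "\<exists>Z\<in>borel_measurable M. distr M borel Z = \<nu>"
proof -
  interpret \<nu>: cdf_distribution \<nu> using \<nu> by (simp add: cdf_distribution_def)
  \<comment> \<open>\<open>\<nu>.I\<close> is the quantile function, the generalised inverse of \<open>cdf \<nu>\<close>.\<close>
  define g where "g u = (if u \<in> {0<..<1} then \<nu>.I u else 0)" for u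
  have "g \<in> borel_measurable borel"
    unfolding g_def using \<nu>.measurable_CI by (subst measurable_restrict_space_iff[symmetric]) auto
  then have Z: "(\<lambda>\<omega>. g (U \<omega>)) \<in> borel_measurable M" using U by measurable
  have "prob {\<omega> \<in> space M. 0 < U \<omega> \<and> U \<omega> < 1} = 1"
  proof -
    have "{\<omega> \<in> space M. 0 < U \<omega> \<and> U \<omega> < 1} =
        {\<omega> \<in> space M. U \<omega> < 1} - {\<omega> \<in> space M. U \<omega> \<le> 0}" by auto
    moreover have "prob ({\<omega> \<in> space M. U \<omega> < 1} - {\<omega> \<in> space M. U \<omega> \<le> 0}) =
        prob {\<omega> \<in> space M. U \<omega> < 1} - prob {\<omega> \<in> space M. U \<omega> \<le> 0}"
      using U by (intro finite_measure_Diff) auto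
    ultimately show ?thesis using uniform_le[of 0] uniform_less[of 1] by simp
  qed
  then have "AE \<omega> in M. \<omega> \<in> {\<omega> \<in> space M. 0 < U \<omega> \<and> U \<omega> < 1}" by (rule AE_prob_1)
  then have AE: "AE \<omega> in M. 0 < U \<omega> \<and> U \<omega> < 1" by (rule eventually_mono) simp
  have "cdf (distr M borel (\<lambda>\<omega>. g (U \<omega>))) x = cdf \<nu> x" for x
  proof -
    have "g u \<le> x \<longleftrightarrow> u \<le> cdf \<nu> x" if "0 < u \<and> u < 1" for u
      using that \<nu>.pseudoinverse[of u x] by (simp add: g_def)
    with AE have "AE \<omega> in M. \<omega> \<in> {\<omega> \<in> space M. g (U \<omega>) \<le> x} \<longleftrightarrow> \<omega> \<in> {\<omega> \<in> space M. U \<omega> \<le> cdf \<nu> x}"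
      by (auto elim: eventually_mono)
    then have "prob {\<omega> \<in> space M. g (U \<omega>) \<le> x} = prob {\<omega> \<in> space M. U \<omega> \<le> cdf \<nu> x}"
      using Z U by (intro measure_eq_AE) auto
    also have "\<dots> = cdf \<nu> x" using uniform_le[OF \<nu>.cdf_nonneg \<nu>.cdf_bounded_prob] .
    finally show ?thesis using Z by (simp add: cdf_distr_eq_prob)
  qed
  then have "distr M borel (\<lambda>\<omega>. g (U \<omega>)) = \<nu>"
    using Z \<nu> by (intro cdf_unique) auto
  then show ?thesis using Z by blast
qed

lemma (in prob_space) prob_eq_sum_partition:
  assumes "finite S" "\<forall>s\<in>S. Om s \<in> events" "disjoint_family_on Om S" "(\<Union>s\<in>S. Om s) = space M"
    and E: "E \<in> events"
  shows "prob E = (\<Sum>s\<in>S. prob (Om s \<inter> E))"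
proof -
  have "(\<Union>s\<in>S. Om s \<inter> E) = E" using assms(4) sets.sets_into_space[OF E] by blast
  then have "prob E = prob (\<Union>s\<in>S. Om s \<inter> E)" by simp
  also have "\<dots> = (\<Sum>s\<in>S. prob (Om s \<inter> E))"
  proof (rule finite_measure_finite_Union[OF assms(1)])
    show "(\<lambda>s. Om s \<inter> E) ` S \<subseteq> events" using assms(2) E by auto
    show "disjoint_family_on (\<lambda>s. Om s \<inter> E) S"
      using assms(3) unfolding disjoint_family_on_def by blast
  qed
  finally show ?thesis .
qed

lemma measurable_glued:
  fixes f :: "'s \<Rightarrow> 'a \<Rightarrow> real"
  assumes "\<forall>s\<in>S. Om s \<in> sets M" "\<forall>s\<in>S. f s \<in> borel_measurable M"
  shows "(\<lambda>\<omega>. \<Sum>s\<in>S. f s \<omega> * indicator (Om s) \<omega>) \<in> borel_measurable M"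
proof (rule borel_measurable_sum[where f = "\<lambda>s \<omega>. f s \<omega> * indicator (Om s) \<omega>"])
  fix s assume "s \<in> S"
  then have [measurable]: "f s \<in> borel_measurable M" "Om s \<in> sets M" using assms by auto
  show "(\<lambda>\<omega>. f s \<omega> * indicator (Om s) \<omega>) \<in> borel_measurable M" by measurable
qed

lemma (in prob_space) prob_glued_le:
  fixes Z Z0 :: "'a \<Rightarrow> real" and \<phi> :: "'s \<Rightarrow> real \<Rightarrow> real"
  assumes S: "finite S"
    and Om: "\<forall>s\<in>S. Om s \<in> events" "disjoint_family_on Om S" "(\<Union>s\<in>S. Om s) = space M"
    and Z: "Z \<in> borel_measurable M"
    and copy: "\<forall>s\<in>S. \<forall>B\<in>sets borel.
      prob (Om s \<inter> (Z -` B \<inter> space M)) = w s * prob (Z0 -` B \<inter> space M)"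
    and \<phi>: "\<forall>s\<in>S. \<phi> s \<in> borel_measurable borel"
  shows "prob {\<omega> \<in> space M. (\<Sum>s\<in>S. \<phi> s (Z \<omega>) * indicator (Om s) \<omega>) \<le> x} =
    (\<Sum>s\<in>S. w s * prob {\<omega> \<in> space M. \<phi> s (Z0 \<omega>) \<le> x})"
proof -
  have "(\<lambda>\<omega>. \<Sum>s\<in>S. \<phi> s (Z \<omega>) * indicator (Om s) \<omega>) \<in> borel_measurable M"
    using Om(1) Z \<phi> by (intro measurable_glued) auto
  then have ev: "{\<omega> \<in> space M. (\<Sum>s\<in>S. \<phi> s (Z \<omega>) * indicator (Om s) \<omega>) \<le> x} \<in> events"
    by measurable
  have glued: "(\<Sum>t\<in>S. \<phi> t (Z \<omega>) * indicator (Om t) \<omega>) = \<phi> s (Z \<omega>)" if "\<omega> \<in> Om s" "s \<in> S" for \<omega> s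
    using sum_indicator_disjoint_family[OF Om(2) that(1) S that(2), of "\<lambda>t. \<phi> t (Z \<omega>)"] by simp
  have "Om s \<inter> {\<omega> \<in> space M. (\<Sum>s\<in>S. \<phi> s (Z \<omega>) * indicator (Om s) \<omega>) \<le> x} =
      Om s \<inter> (Z -` (\<phi> s -` {..x}) \<inter> space M)" if "s \<in> S" for s
    using glued that by auto
  moreover have "prob (Om s \<inter> (Z -` (\<phi> s -` {..x}) \<inter> space M)) =
      w s * prob {\<omega> \<in> space M. \<phi> s (Z0 \<omega>) \<le> x}" if "s \<in> S" for s
  proof -
    have "\<phi> s -` {..x} \<in> sets borel"
      using measurable_sets[of "\<phi> s" borel borel "{..x}"] \<phi> that by simp
    moreover have "Z0 -` (\<phi> s -` {..x}) \<inter> space M = {\<omega> \<in> space M. \<phi> s (Z0 \<omega>) \<le> x}" by auto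
    ultimately show ?thesis using copy that by simp
  qed
  ultimately show ?thesis using prob_eq_sum_partition[OF S Om ev] by simp
qed

section \<open>Atomless probability spaces\<close>

lemma (in prob_space) exists_half_maximal_subevent:
  assumes "A \<in> events" "B \<in> events" "prob B \<le> t"
  obtains C where "C \<in> events" "C \<subseteq> A - B" "prob C \<le> t - prob B"
    "\<forall>D\<in>events. D \<subseteq> A - B \<and> prob D \<le> t - prob B \<longrightarrow> prob D \<le> 2 * prob C"
proof -
  define V where "V = {prob D | D. D \<in> events \<and> D \<subseteq> A - B \<and> prob D \<le> t - prob B}"
  have V: "bdd_above V" unfolding V_def by (auto intro!: bdd_aboveI[of _ 1])
  have sup: "prob D \<le> Sup V" if "D \<in> events" "D \<subseteq> A - B" "prob D \<le> t - prob B" for D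
    using that by (intro cSup_upper[OF _ V]) (auto simp: V_def)
  show ?thesis
  proof (cases "Sup V \<le> 0")
    case True
    then show ?thesis using that[of "{}"] sup assms(3) by fastforce
  next
    case False
    have "0 \<in> V" using assms(3) unfolding V_def by (auto intro!: exI[of _ "{}"])
    then obtain v where "v \<in> V" "Sup V / 2 < v"
      using less_cSup_iff[OF _ V, of "Sup V / 2"] False by fastforce
    then obtain C where "C \<in> events" "C \<subseteq> A - B" "prob C \<le> t - prob B" "Sup V / 2 < prob C"
      unfolding V_def by blast
    then show ?thesis using that sup by fastforce
  qed
qed

lemma (in prob_space) exists_greedy_subevents:
  assumes A: "A \<in> events" and t: "0 \<le> t"
  obtains Bs where "incseq Bs" "\<And>k. Bs k \<in> events" "\<And>k. Bs k \<subseteq> A" "\<And>k. prob (Bs k) \<le> t"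
    "\<And>k D. D \<in> events \<Longrightarrow> D \<subseteq> A - Bs k \<Longrightarrow> prob D \<le> t - prob (Bs k) \<Longrightarrow>
      prob D \<le> 2 * (prob (Bs (Suc k)) - prob (Bs k))"
proof -
  let ?P = "\<lambda>_ B. B \<in> events \<and> B \<subseteq> A \<and> prob B \<le> t"
  let ?Q = "\<lambda>_ B B'. B \<subseteq> B' \<and>
    (\<forall>D\<in>events. D \<subseteq> A - B \<and> prob D \<le> t - prob B \<longrightarrow> prob D \<le> 2 * (prob B' - prob B))"
  have "\<exists>Bs. \<forall>k. ?P k (Bs k) \<and> ?Q k (Bs k) (Bs (Suc k))"
  proof (rule dependent_nat_choice)
    fix B k assume B: "?P k B"
    then obtain C where C: "C \<in> events" "C \<subseteq> A - B" "prob C \<le> t - prob B"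
      "\<forall>D\<in>events. D \<subseteq> A - B \<and> prob D \<le> t - prob B \<longrightarrow> prob D \<le> 2 * prob C"
      using exists_half_maximal_subevent[OF A] by blast
    have "prob (B \<union> C) = prob B + prob C" using B C by (intro finite_measure_Union) auto
    then show "\<exists>B'. ?P (Suc k) B' \<and> ?Q k B B'" using B C by (intro exI[of _ "B \<union> C"]) auto
  qed (use t in auto)
  then obtain Bs where Bs: "\<forall>k. ?P k (Bs k) \<and> ?Q k (Bs k) (Bs (Suc k))" ..
  have Bs_P: "?P k (Bs k)" and Bs_Q: "?Q k (Bs k) (Bs (Suc k))" for k
    using spec[OF Bs, of k] by (rule conjunct1, rule conjunct2)
  show ?thesis
  proof (rule that)
    show "incseq Bs" using Bs_Q by (intro incseq_SucI) blast
    show "Bs k \<in> events" "Bs k \<subseteq> A" "prob (Bs k) \<le> t" for k using Bs_P by blast+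
    show "prob D \<le> 2 * (prob (Bs (Suc k)) - prob (Bs k))"
      if "D \<in> events" "D \<subseteq> A - Bs k" "prob D \<le> t - prob (Bs k)" for k D
      using Bs_Q[of k] that by blast
  qed
qed

locale atomless_prob_space = prob_space +
  assumes atomless: "atomless M"

lemma (in prob_space) atomless_prob_space_uniform_measure:
  assumes "atomless M" "A \<in> events" "0 < prob A"
  shows "atomless_prob_space (uniform_measure M A)"
proof -
  have A: "emeasure M A \<noteq> 0" "emeasure M A \<noteq> \<infinity>"
    using assms(3) by (auto simp: emeasure_eq_measure)
  interpret U: prob_space "uniform_measure M A" by (rule prob_space_uniform_measure[OF A])
  have "\<exists>C\<in>events. C \<subseteq> B \<and>
      0 < prob (A \<inter> C) / prob A \<and> prob (A \<inter> C) / prob A < prob (A \<inter> B) / prob A"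
    if B: "B \<in> events" "0 < prob (A \<inter> B) / prob A" for B
  proof -
    have "0 < prob (A \<inter> B)" using B assms(3) by (simp add: zero_less_divide_iff)
    then obtain C where "C \<in> events" "C \<subseteq> A \<inter> B" "0 < prob C" "prob C < prob (A \<inter> B)"
      using assms(1,2) B(1) unfolding atomless_def by blast
    moreover from this have "A \<inter> C = C" by blast
    ultimately show ?thesis
      using assms(3) by (intro bexI[of _ C]) (auto simp: divide_strict_right_mono)
  qed
  then show ?thesis
    by unfold_locales (simp add: atomless_def A)
qed

lemma dyadic_between:
  assumes "0 \<le> a" "a < b"
  obtains k m where "a < real m / 2 ^ k" "real m / 2 ^ k < b"
proof -
  obtain k where k: "(1 / 2 :: real) ^ k < b - a"
    using real_arch_pow_inv[of "b - a" "1 / 2"] assms(2) by auto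
  define m where "m = nat \<lfloor>a * 2 ^ k\<rfloor> + 1"
  have m: "real m = of_int \<lfloor>a * 2 ^ k\<rfloor> + 1" unfolding m_def using assms(1) by simp
  have "a * 2 ^ k < real m" "real m \<le> a * 2 ^ k + 1" unfolding m by linarith+
  moreover have "a * 2 ^ k + 1 < b * 2 ^ k"
    using k by (simp add: power_one_over field_simps)
  ultimately show ?thesis by (intro that[of m k]) (simp_all add: field_simps)
qed

definition half_event :: "'a measure \<Rightarrow> 'a set \<Rightarrow> 'a set" where
  "half_event M X = (SOME B. B \<in> sets M \<and> B \<subseteq> X \<and> measure M B = measure M X / 2)"

text \<open>
  The nested events \<open>dyadic_level M k m\<close>, of probability \<open>m / 2 ^ k\<close>, are the sublevel sets
  of the uniform random variable \<open>dyadic_uniform M\<close>; level \<open>k + 1\<close> refines level \<open>k\<close> by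
  halving the difference of consecutive events.
\<close>

fun dyadic_level :: "'a measure \<Rightarrow> nat \<Rightarrow> nat \<Rightarrow> 'a set" where
  "dyadic_level M 0 m = (if m = 0 then {} else space M)"
| "dyadic_level M (Suc k) m = (if even m then dyadic_level M k (m div 2)
     else dyadic_level M k (m div 2) \<union>
       half_event M (dyadic_level M k (Suc (m div 2)) - dyadic_level M k (m div 2)))"

lemma dyadic_level_scale: "dyadic_level M (k + j) (m * 2 ^ j) = dyadic_level M k m"
  by (induction j) (simp_all add: mult.left_commute)

definition dyadic_uniform :: "'a measure \<Rightarrow> 'a \<Rightarrow> real" where
  "dyadic_uniform M \<omega> = Inf {real m / 2 ^ k | k m. \<omega> \<in> dyadic_level M k m}"

context atomless_prob_space
begin

lemma exists_subevent_le_half: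
  assumes "B \<in> events" "0 < prob B"
  obtains C where "C \<in> events" "C \<subseteq> B" "0 < prob C" "prob C \<le> prob B / 2"
proof -
  obtain C where C: "C \<in> events" "C \<subseteq> B" "0 < prob C" "prob C < prob B"
    using atomless assms unfolding atomless_def by blast
  show ?thesis
  proof (cases "prob C \<le> prob B / 2")
    case True
    then show ?thesis using that C(1-3) by blast
  next
    case False
    have "prob (B - C) = prob B - prob C" using C assms by (simp add: finite_measure_Diff)
    then show ?thesis using that[of "B - C"] C(1,4) assms(1) False by auto
  qed
qed

lemma exists_small_subevent:
  assumes A: "A \<in> events" "0 < prob A" and e: "0 < e"
  obtains B where "B \<in> events" "B \<subseteq> A" "0 < prob B" "prob B < e"
proof -
  have "\<exists>B\<in>events. B \<subseteq> A \<and> 0 < prob B \<and> prob B \<le> (1 / 2) ^ k" for k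
  proof (induction k)
    case 0
    then show ?case using A by auto
  next
    case (Suc k)
    then obtain B where B: "B \<in> events" "B \<subseteq> A" "0 < prob B" "prob B \<le> (1 / 2) ^ k" by blast
    then obtain C where "C \<in> events" "C \<subseteq> B" "0 < prob C" "prob C \<le> prob B / 2"
      using exists_subevent_le_half by blast
    with B show ?case by (intro bexI[of _ C]) auto
  qed
  moreover obtain k where "(1 / 2 :: real) ^ k < e"
    using real_arch_pow_inv[OF e, of "1 / 2"] by auto
  ultimately obtain B where "B \<in> events" "B \<subseteq> A" "0 < prob B" "prob B < e"
    by (meson le_less_trans)
  then show ?thesis by (rule that)
qed

theorem exists_subevent_with_prob:
  assumes A: "A \<in> events" and t: "0 \<le> t" "t \<le> prob A"
  obtains B where "B \<in> events" "B \<subseteq> A" "prob B = t"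
proof -
  obtain Bs where Bs: "incseq Bs" "\<And>k. Bs k \<in> events" "\<And>k. Bs k \<subseteq> A" "\<And>k. prob (Bs k) \<le> t"
    and greedy: "\<And>k D. D \<in> events \<Longrightarrow> D \<subseteq> A - Bs k \<Longrightarrow> prob D \<le> t - prob (Bs k) \<Longrightarrow>
      prob D \<le> 2 * (prob (Bs (Suc k)) - prob (Bs k))"
    using exists_greedy_subevents[OF A t(1)] by blast
  define B where "B = (\<Union>k. Bs k)"
  have B: "B \<in> events" "B \<subseteq> A" using Bs(2,3) unfolding B_def by auto
  have "(\<lambda>k. prob (Bs k)) \<longlonglongrightarrow> prob B"
    unfolding B_def using Bs(1,2) by (intro finite_Lim_measure_incseq) auto
  then have "prob B \<le> t" by (rule LIMSEQ_le_const2) (use Bs(4) in simp)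
  \<comment> \<open>A small event in \<open>A - B\<close> would be a candidate at every step of the greedy
    construction, so every step would add at least half of its probability.\<close>
  moreover have "\<not> prob B < t"
  proof
    assume "prob B < t"
    moreover have "prob (A - B) = prob A - prob B" using A B by (simp add: finite_measure_Diff)
    ultimately obtain D where D: "D \<in> events" "D \<subseteq> A - B" "0 < prob D" "prob D < t - prob B"
      using exists_small_subevent[of "A - B" "t - prob B"] A B t by auto
    have step: "prob D \<le> 2 * (prob (Bs (Suc k)) - prob (Bs k))" for k
    proof (rule greedy[OF D(1)])
      show "D \<subseteq> A - Bs k" using D(2) unfolding B_def by blast
      have "prob (Bs k) \<le> prob B"
        using Bs(2) B(1) unfolding B_def by (intro finite_measure_mono) auto
      then show "prob D \<le> t - prob (Bs k)" using D(4) by linarith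
    qed
    have grow: "real k * prob D \<le> 2 * prob (Bs k)" for k
    proof (induction k)
      case (Suc k)
      then show ?case using step[of k] by (simp add: distrib_right)
    qed simp
    obtain k where "2 / prob D < real k" using reals_Archimedean2 by blast
    then have "2 < real k * prob D" using D(3) by (simp add: field_simps)
    then show False using grow[of k] prob_le_1[of "Bs k"] by linarith
  qed
  ultimately have "prob B = t" by linarith
  with B show ?thesis by (rule that)
qed

lemma exists_partition_with_probs:
  assumes "finite S" "S \<noteq> {}" "\<forall>s\<in>S. 0 \<le> w s" "A \<in> events" "sum w S = prob A"
  shows "\<exists>Om. (\<forall>s\<in>S. Om s \<in> events \<and> prob (Om s) = w s) \<and> disjoint_family_on Om S \<and>
    (\<Union>s\<in>S. Om s) = A"
  using assms
proof (induction S arbitrary: A rule: finite_ne_induct)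
  case (singleton s)
  then show ?case by (intro exI[of _ "\<lambda>_. A"]) (simp add: disjoint_family_on_def)
next
  case (insert s S)
  have "0 \<le> sum w S" using insert.prems(1) by (intro sum_nonneg) auto
  then obtain B where B: "B \<in> events" "B \<subseteq> A" "prob B = w s"
    using exists_subevent_with_prob[OF insert.prems(2), of "w s"] insert.prems(1,3) insert.hyps
    by auto
  have "prob (A - B) = sum w S"
    using B insert.prems(2,3) insert.hyps by (simp add: finite_measure_Diff)
  then obtain Om where Om: "\<forall>s\<in>S. Om s \<in> events \<and> prob (Om s) = w s" "disjoint_family_on Om S"
    "(\<Union>s\<in>S. Om s) = A - B"
    using insert.IH[of "A - B"] insert.prems(1,2) B(1) by auto
  define Om' where "Om' = Om(s := B)"
  have Om': "Om' s = B" "\<And>t. t \<in> S \<Longrightarrow> Om' t = Om t"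
    unfolding Om'_def using insert.hyps by auto
  have "\<forall>t\<in>insert s S. Om' t \<in> events \<and> prob (Om' t) = w t" using Om(1) Om' B by simp
  moreover have "disjoint_family_on Om' (insert s S)"
  proof -
    have "Om t \<inter> B = {}" if "t \<in> S" for t using Om(3) that by blast
    then show ?thesis
      using Om(2) Om' insert.hyps unfolding disjoint_family_on_def by (simp add: Int_commute)
  qed
  moreover have "(\<Union>t\<in>insert s S. Om' t) = A"
    using Om(3) Om' B(2) by auto
  ultimately show ?case by blast
qed

lemma half_event_halves:
  assumes "X \<in> events"
  shows "half_event M X \<in> events" "half_event M X \<subseteq> X" "prob (half_event M X) = prob X / 2"
proof -
  obtain B where "B \<in> events" "B \<subseteq> X" "prob B = prob X / 2"
    using exists_subevent_with_prob[OF assms, of "prob X / 2"] by auto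
  then have "\<exists>B. B \<in> events \<and> B \<subseteq> X \<and> prob B = prob X / 2" by blast
  from someI_ex[OF this] show "half_event M X \<in> events" "half_event M X \<subseteq> X"
    "prob (half_event M X) = prob X / 2" unfolding half_event_def by blast+
qed

lemma dyadic_level_in_events: "dyadic_level M k m \<in> events"
proof (induction k arbitrary: m)
  case (Suc k)
  then show ?case
    using half_event_halves(1)[of "dyadic_level M k (Suc (m div 2)) - dyadic_level M k (m div 2)"]
    by auto
qed simp

lemma dyadic_level_Suc_mono: "dyadic_level M k m \<subseteq> dyadic_level M k (Suc m)"
proof (induction k arbitrary: m)
  case (Suc k)
  have half:
    "half_event M (dyadic_level M k (Suc q) - dyadic_level M k q) \<subseteq> dyadic_level M k (Suc q)"
    for q using half_event_halves(2) dyadic_level_in_events by blast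
  show ?case
  proof (cases "even m")
    case True
    then show ?thesis by auto
  next
    case False
    then have "Suc m div 2 = Suc (m div 2)" by presburger
    with False show ?thesis using half[of "m div 2"] Suc[of "m div 2"] by auto
  qed
qed simp

lemma dyadic_level_mono: "m \<le> m' \<Longrightarrow> dyadic_level M k m \<subseteq> dyadic_level M k m'"
  by (rule lift_Suc_mono_le[of "dyadic_level M k"]) (use dyadic_level_Suc_mono in auto)

lemma dyadic_level_mono_ratio:
  assumes "real m / 2 ^ k \<le> real m' / 2 ^ k'"
  shows "dyadic_level M k m \<subseteq> dyadic_level M k' m'"
proof -
  have "real (m * 2 ^ k') \<le> real (m' * 2 ^ k)"
    using assms by (simp add: field_simps)
  then have "dyadic_level M (k + k') (m * 2 ^ k') \<subseteq> dyadic_level M (k + k') (m' * 2 ^ k)"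
    by (intro dyadic_level_mono) linarith
  then show ?thesis by (metis dyadic_level_scale add.commute)
qed

lemma prob_dyadic_level: "m \<le> 2 ^ k \<Longrightarrow> prob (dyadic_level M k m) = real m / 2 ^ k"
proof (induction k arbitrary: m)
  case 0
  then have "m = 0 \<or> m = 1" by auto
  then show ?case by (auto simp: prob_space)
next
  case (Suc k)
  let ?L = "dyadic_level M k"
  show ?case
  proof (cases "even m")
    case True
    then show ?thesis using Suc by (auto simp: field_simps)
  next
    case False
    define q where "q = m div 2"
    have m: "m = 2 * q + 1" using False unfolding q_def by presburger
    then have q: "Suc q \<le> 2 ^ k" using Suc.prems by simp
    let ?D = "?L (Suc q) - ?L q"
    have D: "?D \<in> events" using dyadic_level_in_events by blast
    have "prob (dyadic_level M (Suc k) m) = prob (?L q \<union> half_event M ?D)"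
      using False unfolding q_def by simp
    also have "\<dots> = prob (?L q) + prob ?D / 2"
      using half_event_halves[OF D] dyadic_level_in_events by (subst finite_measure_Union) auto
    also have "\<dots> = prob (?L q) + (prob (?L (Suc q)) - prob (?L q)) / 2"
      using dyadic_level_Suc_mono dyadic_level_in_events by (simp add: finite_measure_Diff)
    also have "\<dots> = real m / 2 ^ Suc k"
      using Suc.IH[of q] Suc.IH[of "Suc q"] q m by (simp add: field_simps)
    finally show ?thesis .
  qed
qed

lemma dyadic_uniform_less_iff:
  assumes "\<omega> \<in> space M"
  shows "dyadic_uniform M \<omega> < c \<longleftrightarrow> (\<exists>k m. \<omega> \<in> dyadic_level M k m \<and> real m / 2 ^ k < c)"
proof -
  let ?D = "{real m / 2 ^ k | k m. \<omega> \<in> dyadic_level M k m}"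
  have "1 \<in> ?D" using assms by (auto intro!: exI[of _ 0] exI[of _ 1])
  moreover have "bdd_below ?D" by (auto intro!: bdd_belowI[of _ 0])
  ultimately show ?thesis unfolding dyadic_uniform_def by (subst cInf_less_iff) auto
qed

lemma dyadic_level_subset_dyadic_uniform_less:
  assumes "real m / 2 ^ k < c"
  shows "dyadic_level M k m \<subseteq> {\<omega> \<in> space M. dyadic_uniform M \<omega> < c}"
proof
  fix \<omega> assume \<omega>: "\<omega> \<in> dyadic_level M k m"
  moreover have "\<omega> \<in> space M" using \<omega> sets.sets_into_space[OF dyadic_level_in_events] by blast
  ultimately show "\<omega> \<in> {\<omega> \<in> space M. dyadic_uniform M \<omega> < c}"
    using dyadic_uniform_less_iff assms by blast
qed

lemma measurable_dyadic_uniform: "dyadic_uniform M \<in> borel_measurable M"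
  unfolding borel_measurable_iff_less
proof
  fix c
  have "{\<omega> \<in> space M. dyadic_uniform M \<omega> < c} =
      (\<Union>k. \<Union>m. if real m / 2 ^ k < c then dyadic_level M k m else {})"
  proof (intro equalityI subsetI)
    fix \<omega> assume "\<omega> \<in> {\<omega> \<in> space M. dyadic_uniform M \<omega> < c}"
    then obtain k m where "\<omega> \<in> dyadic_level M k m" "real m / 2 ^ k < c"
      using dyadic_uniform_less_iff by blast
    then show "\<omega> \<in> (\<Union>k. \<Union>m. if real m / 2 ^ k < c then dyadic_level M k m else {})" by auto
  next
    fix \<omega> assume "\<omega> \<in> (\<Union>k. \<Union>m. if real m / 2 ^ k < c then dyadic_level M k m else {})"
    then obtain k m where "\<omega> \<in> dyadic_level M k m" "real m / 2 ^ k < c"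
      by (auto split: if_splits)
    then show "\<omega> \<in> {\<omega> \<in> space M. dyadic_uniform M \<omega> < c}"
      using dyadic_level_subset_dyadic_uniform_less by blast
  qed
  also have "\<dots> \<in> events" using dyadic_level_in_events by auto
  finally show "{\<omega> \<in> space M. dyadic_uniform M \<omega> < c} \<in> events" .
qed

lemma dyadic_uniform_le_subset_dyadic_level:
  assumes "c < real m / 2 ^ k"
  shows "{\<omega> \<in> space M. dyadic_uniform M \<omega> \<le> c} \<subseteq> dyadic_level M k m"
proof
  fix \<omega> assume "\<omega> \<in> {\<omega> \<in> space M. dyadic_uniform M \<omega> \<le> c}"
  then have "\<omega> \<in> space M" "dyadic_uniform M \<omega> < real m / 2 ^ k" using assms by auto
  then obtain k' m' where "\<omega> \<in> dyadic_level M k' m'" "real m' / 2 ^ k' < real m / 2 ^ k"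
    using dyadic_uniform_less_iff by blast
  then show "\<omega> \<in> dyadic_level M k m" using dyadic_level_mono_ratio less_imp_le by blast
qed

lemma prob_dyadic_uniform:
  assumes "0 \<le> c" "c \<le> 1"
  shows "prob {\<omega> \<in> space M. dyadic_uniform M \<omega> < c} = c"
    and "prob {\<omega> \<in> space M. dyadic_uniform M \<omega> \<le> c} = c"
proof -
  let ?L = "{\<omega> \<in> space M. dyadic_uniform M \<omega> < c}" and ?R = "{\<omega> \<in> space M. dyadic_uniform M \<omega> \<le> c}"
  have ev: "?L \<in> events" "?R \<in> events" using measurable_dyadic_uniform by measurable
  have prob_level: "prob (dyadic_level M k m) = real m / 2 ^ k" if "real m / 2 ^ k \<le> 1" for k m
    using that by (intro prob_dyadic_level) (simp add: divide_le_eq_1)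
  have "c \<le> prob ?L"
  proof (rule ccontr)
    assume "\<not> c \<le> prob ?L"
    then have "prob ?L < c" by simp
    then obtain k m where km: "prob ?L < real m / 2 ^ k" "real m / 2 ^ k < c"
      by (rule dyadic_between[OF measure_nonneg])
    have "prob (dyadic_level M k m) \<le> prob ?L"
      using dyadic_level_subset_dyadic_uniform_less[OF km(2)] ev(1) by (rule finite_measure_mono)
    then show False using prob_level[of m k] km assms(2) by linarith
  qed
  moreover have "prob ?R \<le> c"
  proof (rule ccontr)
    assume "\<not> prob ?R \<le> c"
    then have "c < prob ?R" by simp
    then obtain k m where km: "c < real m / 2 ^ k" "real m / 2 ^ k < prob ?R"
      by (rule dyadic_between[OF assms(1)])
    have "prob ?R \<le> prob (dyadic_level M k m)"
      using dyadic_uniform_le_subset_dyadic_level[OF km(1)] dyadic_level_in_events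
      by (rule finite_measure_mono)
    then show False using prob_level[of m k] km prob_le_1[of ?R] by linarith
  qed
  moreover have "prob ?L \<le> prob ?R" using ev by (intro finite_measure_mono) auto
  ultimately show "prob ?L = c" "prob ?R = c" by linarith+
qed

lemma exists_distributed:
  assumes "real_distribution \<nu>"
  shows "\<exists>Z\<in>borel_measurable M. distr M borel Z = \<nu>"
  using exists_distributed_of_uniform[OF measurable_dyadic_uniform prob_dyadic_uniform assms] .

lemma exists_conditional_copy:
  fixes Z0 :: "'a \<Rightarrow> real"
  assumes A: "A \<in> events" and Z0: "Z0 \<in> borel_measurable M"
  shows "\<exists>Z\<in>borel_measurable M. \<forall>B\<in>sets borel.
    prob (A \<inter> (Z -` B \<inter> space M)) = prob A * prob (Z0 -` B \<inter> space M)"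
proof (cases "prob A = 0")
  case True
  have "prob (A \<inter> (Z0 -` B \<inter> space M)) = 0" for B
  proof -
    have "prob (A \<inter> (Z0 -` B \<inter> space M)) \<le> prob A" using A by (intro finite_measure_mono) auto
    then show ?thesis using True measure_nonneg[of M "A \<inter> (Z0 -` B \<inter> space M)"] by linarith
  qed
  then show ?thesis using Z0 by (intro bexI[of _ Z0]) (simp_all add: True)
next
  case False
  then have pA: "0 < prob A" using measure_nonneg[of M A] by linarith
  then have eA: "emeasure M A \<noteq> 0" "emeasure M A \<noteq> \<infinity>" by (auto simp: emeasure_eq_measure)
  interpret C: atomless_prob_space "uniform_measure M A"
    using atomless_prob_space_uniform_measure[OF atomless A pA] .
  have "real_distribution (distr M borel Z0)" using Z0 by simp
  then obtain Z where Z_C: "Z \<in> borel_measurable (uniform_measure M A)"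
    and Z_distr: "distr (uniform_measure M A) borel Z = distr M borel Z0"
    using C.exists_distributed by blast
  have Z: "Z \<in> borel_measurable M"
    using Z_C measurable_cong_sets[OF sets_uniform_measure refl, of M A borel] by simp
  have "prob (A \<inter> (Z -` B \<inter> space M)) = prob A * prob (Z0 -` B \<inter> space M)"
    if B: "B \<in> sets borel" for B
  proof -
    have "prob (A \<inter> (Z -` B \<inter> space M)) / prob A = measure (uniform_measure M A) (Z -` B \<inter> space M)"
      using measurable_sets[OF Z B] by (rule measure_uniform_measure[OF eA, symmetric])
    also have "\<dots> = measure (distr (uniform_measure M A) borel Z) B"
      using measure_distr[OF Z_C B] by simp
    also have "\<dots> = prob (Z0 -` B \<inter> space M)"
      unfolding Z_distr using measure_distr[OF Z0 B] .
    finally show ?thesis using pA by (simp add: field_simps)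
  qed
  then show ?thesis using Z by blast
qed

lemma exists_independent_copy:
  fixes Z0 :: "'a \<Rightarrow> real"
  assumes S: "finite S" "S \<noteq> {}" and w: "\<forall>s\<in>S. 0 \<le> w s" "sum w S = 1"
    and Z0: "Z0 \<in> borel_measurable M"
  obtains Om Z where "\<forall>s\<in>S. Om s \<in> events" "disjoint_family_on Om S" "(\<Union>s\<in>S. Om s) = space M"
    "Z \<in> borel_measurable M"
    "\<forall>s\<in>S. \<forall>B\<in>sets borel. prob (Om s \<inter> (Z -` B \<inter> space M)) = w s * prob (Z0 -` B \<inter> space M)"
proof -
  obtain Om where Om: "\<forall>s\<in>S. Om s \<in> events \<and> prob (Om s) = w s" "disjoint_family_on Om S"
    "(\<Union>s\<in>S. Om s) = space M"
    using exists_partition_with_probs[OF S w(1) sets.top] w(2) prob_space by auto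
  have "\<forall>s\<in>S. \<exists>Z. Z \<in> borel_measurable M \<and> (\<forall>B\<in>sets borel.
      prob (Om s \<inter> (Z -` B \<inter> space M)) = w s * prob (Z0 -` B \<inter> space M))"
  proof
    fix s assume "s \<in> S"
    then show "\<exists>Z. Z \<in> borel_measurable M \<and> (\<forall>B\<in>sets borel.
        prob (Om s \<inter> (Z -` B \<inter> space M)) = w s * prob (Z0 -` B \<inter> space M))"
      using exists_conditional_copy[OF _ Z0, of "Om s"] Om(1) by auto
  qed
  from bchoice[OF this] obtain Zs where Zs: "\<forall>s\<in>S. Zs s \<in> borel_measurable M \<and> (\<forall>B\<in>sets borel.
      prob (Om s \<inter> (Zs s -` B \<inter> space M)) = w s * prob (Z0 -` B \<inter> space M))" ..
  define Z where "Z \<omega> = (\<Sum>s\<in>S. Zs s \<omega> * indicator (Om s) \<omega>)" for \<omega>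
  show ?thesis
  proof (rule that)
    show "\<forall>s\<in>S. Om s \<in> events" using Om(1) by blast
    show "Z \<in> borel_measurable M" unfolding Z_def using Om(1) Zs by (intro measurable_glued) auto
    have "Z \<omega> = Zs s \<omega>" if "\<omega> \<in> Om s" "s \<in> S" for \<omega> s
      unfolding Z_def
      using sum_indicator_disjoint_family[OF Om(2) that(1) S(1) that(2), of "\<lambda>t. Zs t \<omega>"] by simp
    then have "Om s \<inter> (Z -` B \<inter> space M) = Om s \<inter> (Zs s -` B \<inter> space M)" if "s \<in> S" for s B
      using that by auto
    then show "\<forall>s\<in>S. \<forall>B\<in>sets borel.
        prob (Om s \<inter> (Z -` B \<inter> space M)) = w s * prob (Z0 -` B \<inter> space M)"
      using Zs by simp
  qed (use Om in auto)
qed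

end

section \<open>Sums of random variables under majorization\<close>

lemma (in atomless_prob_space) exists_randomly_permuted_copy:
  fixes X :: "nat \<Rightarrow> 'a \<Rightarrow> real" and w :: "(nat \<Rightarrow> nat) \<Rightarrow> real"
  assumes w: "\<forall>\<sigma>. 0 \<le> w \<sigma>" "(\<Sum>\<sigma> | \<sigma> permutes {..<n}. w \<sigma>) = 1"
    and X: "\<forall>i<n. X i \<in> borel_measurable M"
  obtains Y where "\<And>i. Y i \<in> borel_measurable M"
    "\<And>i x. i < n \<Longrightarrow> prob {\<omega> \<in> space M. Y i \<omega> \<le> x} =
      (\<Sum>\<sigma> | \<sigma> permutes {..<n}. w \<sigma> * prob {\<omega> \<in> space M. X (\<sigma> i) \<omega> \<le> x})"
    "\<And>x. prob {\<omega> \<in> space M. (\<Sum>i<n. Y i \<omega>) \<le> x} = prob {\<omega> \<in> space M. (\<Sum>i<n. X i \<omega>) \<le> x}"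
proof -
  let ?P = "{\<sigma>. \<sigma> permutes {..<n}}"
  have P: "finite ?P" "?P \<noteq> {}" using finite_permutations[of "{..<n}"] permutes_id by blast+
  obtain Z0 where Z0: "Z0 \<in> borel_measurable M"
    and decode_Z0: "\<And>i \<omega>. i < n \<Longrightarrow> decode n i (Z0 \<omega>) = X i \<omega>"
    using exists_measurable_code[OF X] by blast
  have w': "\<forall>\<sigma>\<in>?P. 0 \<le> w \<sigma>" "sum w ?P = 1" using w by auto
  obtain Om Z where Om: "\<forall>\<sigma>\<in>?P. Om \<sigma> \<in> events" "disjoint_family_on Om ?P" "(\<Union>\<sigma>\<in>?P. Om \<sigma>) = space M"
    and Z: "Z \<in> borel_measurable M"
    and copy: "\<forall>\<sigma>\<in>?P. \<forall>B\<in>sets borel.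
      prob (Om \<sigma> \<inter> (Z -` B \<inter> space M)) = w \<sigma> * prob (Z0 -` B \<inter> space M)"
    using exists_independent_copy[OF P w' Z0] by blast
  define Y where "Y i \<omega> = (\<Sum>\<sigma>\<in>?P. decode n (\<sigma> i) (Z \<omega>) * indicator (Om \<sigma>) \<omega>)" for i \<omega>
  show ?thesis
  proof (rule that)
    show "Y i \<in> borel_measurable M" for i
      unfolding Y_def using Om(1) Z by (intro measurable_glued) auto
    show "prob {\<omega> \<in> space M. Y i \<omega> \<le> x} = (\<Sum>\<sigma>\<in>?P. w \<sigma> * prob {\<omega> \<in> space M. X (\<sigma> i) \<omega> \<le> x})"
      if i: "i < n" for i x
    proof -
      have "\<sigma> i < n" if "\<sigma> \<in> ?P" for \<sigma> using permutes_in_image[of \<sigma> "{..<n}" i] that i by simp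
      then have "(\<Sum>\<sigma>\<in>?P. w \<sigma> * prob {\<omega> \<in> space M. decode n (\<sigma> i) (Z0 \<omega>) \<le> x}) =
          (\<Sum>\<sigma>\<in>?P. w \<sigma> * prob {\<omega> \<in> space M. X (\<sigma> i) \<omega> \<le> x})"
        using decode_Z0 by (intro sum.cong) simp_all
      moreover have "prob {\<omega> \<in> space M. Y i \<omega> \<le> x} =
          (\<Sum>\<sigma>\<in>?P. w \<sigma> * prob {\<omega> \<in> space M. decode n (\<sigma> i) (Z0 \<omega>) \<le> x})"
        unfolding Y_def
        by (rule prob_glued_le[OF P(1) Om Z copy, where \<phi> = "\<lambda>\<sigma>. decode n (\<sigma> i)"]) simp
      ultimately show ?thesis by simp
    qed
    show "prob {\<omega> \<in> space M. (\<Sum>i<n. Y i \<omega>) \<le> x} = prob {\<omega> \<in> space M. (\<Sum>i<n. X i \<omega>) \<le> x}" for x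
    proof -
      have "(\<Sum>i<n. Y i \<omega>) = (\<Sum>\<sigma>\<in>?P. (\<Sum>j<n. decode n j (Z \<omega>)) * indicator (Om \<sigma>) \<omega>)" for \<omega>
        unfolding Y_def by (rule sum_permutations_glue[where g = "\<lambda>j. decode n j (Z \<omega>)"])
      then have "prob {\<omega> \<in> space M. (\<Sum>i<n. Y i \<omega>) \<le> x} =
          (\<Sum>\<sigma>\<in>?P. w \<sigma> * prob {\<omega> \<in> space M. (\<Sum>j<n. decode n j (Z0 \<omega>)) \<le> x})"
        by (simp only:)
          (rule prob_glued_le[OF P(1) Om Z copy, where \<phi> = "\<lambda>_ z. \<Sum>j<n. decode n j z"], simp)
      also have "\<dots> = prob {\<omega> \<in> space M. (\<Sum>i<n. X i \<omega>) \<le> x}"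
        using w'(2) decode_Z0 by (simp add: sum_distrib_right[symmetric])
      finally show ?thesis .
    qed
  qed
qed

lemma (in atomless_prob_space) Dn_subset_of_permutation_mixture:
  fixes F G :: "nat \<Rightarrow> real \<Rightarrow> real" and w :: "(nat \<Rightarrow> nat) \<Rightarrow> real"
  assumes w: "\<forall>\<sigma>. 0 \<le> w \<sigma>" "(\<Sum>\<sigma> | \<sigma> permutes {..<n}. w \<sigma>) = 1"
    and G: "\<forall>i<n. \<forall>x. G i x = (\<Sum>\<sigma> | \<sigma> permutes {..<n}. w \<sigma> * F (\<sigma> i) x)"
  shows "Dn M n F \<subseteq> Dn M n G"
proof
  fix h assume "h \<in> Dn M n F"
  then obtain X where X: "\<forall>i<n. X i \<in> borel_measurable M \<and> cdf (distr M borel (X i)) = F i"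
    and h: "h = cdf (distr M borel (\<lambda>\<omega>. \<Sum>i<n. X i \<omega>))" unfolding Dn_def by blast
  obtain Y where Y: "\<And>i. Y i \<in> borel_measurable M"
    and marginal: "\<And>i x. i < n \<Longrightarrow> prob {\<omega> \<in> space M. Y i \<omega> \<le> x} =
      (\<Sum>\<sigma> | \<sigma> permutes {..<n}. w \<sigma> * prob {\<omega> \<in> space M. X (\<sigma> i) \<omega> \<le> x})"
    and sum: "\<And>x. prob {\<omega> \<in> space M. (\<Sum>i<n. Y i \<omega>) \<le> x} = prob {\<omega> \<in> space M. (\<Sum>i<n. X i \<omega>) \<le> x}"
    using exists_randomly_permuted_copy[OF w] X by blast
  have "cdf (distr M borel (Y i)) = G i" if i: "i < n" for i
  proof
    fix x
    have "prob {\<omega> \<in> space M. X (\<sigma> i) \<omega> \<le> x} = F (\<sigma> i) x" if "\<sigma> permutes {..<n}" for \<sigma>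
      using X permutes_in_image[OF that, of i] i cdf_distr_eq_prob[of "X (\<sigma> i)" M x] by simp
    then show "cdf (distr M borel (Y i)) x = G i x"
      using marginal[OF i] G i Y by (simp add: cdf_distr_eq_prob)
  qed
  moreover have "cdf (distr M borel (\<lambda>\<omega>. \<Sum>i<n. Y i \<omega>)) = h"
  proof
    fix x
    have "(\<lambda>\<omega>. \<Sum>i<n. X i \<omega>) \<in> borel_measurable M" using X by (intro borel_measurable_sum) auto
    then show "cdf (distr M borel (\<lambda>\<omega>. \<Sum>i<n. Y i \<omega>)) x = h x"
      unfolding h using sum Y by (simp add: cdf_distr_eq_prob borel_measurable_sum)
  qed
  ultimately show "h \<in> Dn M n G" unfolding Dn_def using Y by blast
qed

theorem corollary4:
  fixes M :: "'a measure" and n :: nat and F G :: "nat \<Rightarrow> real \<Rightarrow> real"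
  assumes "prob_space M" and "atomless M"
    and "\<forall>i<n. is_cdf (F i)" and "\<forall>i<n. is_cdf (G i)"
    and "majorized n G F"
  shows "Dn M n F \<subseteq> Dn M n G"
proof -
  interpret atomless_prob_space M
    using assms(1,2) by (simp add: atomless_prob_space_def atomless_prob_space_axioms_def)
  obtain w where "\<forall>\<sigma>. 0 \<le> w \<sigma>" "(\<Sum>\<sigma> | \<sigma> permutes {..<n}. w \<sigma>) = 1"
    "\<forall>i<n. \<forall>x. G i x = (\<Sum>\<sigma> | \<sigma> permutes {..<n}. w \<sigma> * F (\<sigma> i) x)"
    using majorized_imp_permutation_mixture[OF assms(5)] by blast
  then show ?thesis by (rule Dn_subset_of_permutation_mixture)
qed

end
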